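(* Let $\{B_n(\mathbf{t})\}_{n\in\mathbb{N}}$ be a solution of the Volterra lattice hierarchy, i.e. of the compatible equations $$\partial_{t_{2k}}B_n=B_n\big(V^{(2k)}_{n+1}-V^{(2k)}_{n-1}\big),$$ where $V^{(2)}_n=B_n$, $V^{(4)}_n=V^{(2)}_n\big(V^{(2)}_{n-1}+V^{(2)}_n+V^{(2)}_{n+1}\big)$, $V^{(6)}_n=V^{(2)}_n\big(V^{(2)}_{n-1}V^{(2)}_{n+1}+V^{(4)}_{n-1}+V^{(4)}_n+V^{(4)}_{n+1}\big)$ (so that in particular $\partial_{t_2}B_n=B_n(B_{n+1}-B_{n-1})$). For a given $n\in\mathbb{N}$ set $\phi(\mathbf{t})=B_n(\mathbf{t})$, $\psi(\mathbf{t})=B_{n-1}(\mathbf{t})$, and write $x=t_2$, $y=t_4$, $t=t_6$. Then $\phi,\psi$ satisfy the two compatible systems of $(1+1)$-dimensional conservation laws $$\phi_y=\big(\phi^2+2\phi\psi+\phi_x\big)_x,\qquad \psi_y=\big(\psi^2+2\phi\psi-\psi_x\big)_x,$$ and $$\phi_t=\big(\phi^3+3(\psi+2\phi)\phi\psi+3(\phi+\psi)\phi_x+\phi_{xx}\big)_x,\qquad \psi_t=\big(\psi^3+3(\phi+2\psi)\phi\psi-3(\phi+\psi)\psi_x+\psi_{xx}\big)_x.$$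
   Context: $\mathbf{t}=(t_2,t_4,t_6,\dots)$ denotes the even coupling constants (times of the hierarchy); subscripts $x,y,t$ denote partial derivatives with respect to $t_2,t_4,t_6$ respectively. *)

theory Defs
  imports "HOL-Analysis.Analysis"
begin

text \<open>A lattice field is B :: int => real => real => real => real, B n x y t with
  x = t_2, y = t_4, t = t_6 (the remaining higher times are held fixed).\<close>

type_synonym lattice = "int \<Rightarrow> real \<Rightarrow> real \<Rightarrow> real \<Rightarrow> real"

definition Dx :: "(real \<Rightarrow> real \<Rightarrow> real \<Rightarrow> real) \<Rightarrow> real \<Rightarrow> real \<Rightarrow> real \<Rightarrow> real" where
  "Dx f x y t = deriv (\<lambda>s. f s y t) x"

definition Dy :: "(real \<Rightarrow> real \<Rightarrow> real \<Rightarrow> real) \<Rightarrow> real \<Rightarrow> real \<Rightarrow> real \<Rightarrow> real" where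
  "Dy f x y t = deriv (\<lambda>s. f x s t) y"

definition Dt :: "(real \<Rightarrow> real \<Rightarrow> real \<Rightarrow> real) \<Rightarrow> real \<Rightarrow> real \<Rightarrow> real \<Rightarrow> real" where
  "Dt f x y t = deriv (\<lambda>s. f x y s) t"

definition V2 :: "lattice \<Rightarrow> lattice" where
  "V2 B n x y t = B n x y t"

definition V4 :: "lattice \<Rightarrow> lattice" where
  "V4 B n x y t = V2 B n x y t * (V2 B (n-1) x y t + V2 B n x y t + V2 B (n+1) x y t)"

definition V6 :: "lattice \<Rightarrow> lattice" where
  "V6 B n x y t = V2 B n x y t *
     (V2 B (n-1) x y t * V2 B (n+1) x y t + V4 B (n-1) x y t + V4 B n x y t + V4 B (n+1) x y t)"

definition volterra_hierarchy :: "lattice \<Rightarrow> bool" where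
  "volterra_hierarchy B \<longleftrightarrow> (\<forall>n x y t.
     ((\<lambda>s. B n s y t) has_real_derivative B n x y t * (V2 B (n+1) x y t - V2 B (n-1) x y t)) (at x) \<and>
     ((\<lambda>s. B n x s t) has_real_derivative B n x y t * (V4 B (n+1) x y t - V4 B (n-1) x y t)) (at y) \<and>
     ((\<lambda>s. B n x y s) has_real_derivative B n x y t * (V6 B (n+1) x y t - V6 B (n-1) x y t)) (at t))"

end

theory Submission
  imports Defs
begin

text \<open>By the first flow, every x-derivative of a lattice field is a polynomial in its neighbours.
  Substituting this into the fluxes, and the t_4 and t_6 flows into the left-hand sides, turns each
  conservation law into a polynomial identity in B_{n-3}, ..., B_{n+2}.\<close>

lemma volterra_x_flow:
  assumes "volterra_hierarchy B"
  shows "((\<lambda>s. B k s y t) has_real_derivative B k x y t * (B (k+1) x y t - B (k-1) x y t)) (at x)"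
  using assms unfolding volterra_hierarchy_def V2_def by blast

lemma volterra_Dx:
  assumes "volterra_hierarchy B"
  shows "Dx (B k) x y t = B k x y t * (B (k+1) x y t - B (k-1) x y t)"
  unfolding Dx_def by (rule DERIV_imp_deriv) (rule volterra_x_flow[OF assms])

lemma volterra_Dx_Dx:
  assumes H: "volterra_hierarchy B"
  shows "Dx (Dx (B k)) x y t =
    B k x y t * (B (k+1) x y t - B (k-1) x y t)^2
    + B k x y t * (B (k+1) x y t * (B (k+2) x y t - B k x y t)
                 - B (k-1) x y t * (B k x y t - B (k-2) x y t))"
  unfolding Dx_def[of "Dx (B k)"] volterra_Dx[OF H]
  by (rule DERIV_imp_deriv, rule DERIV_cong, (rule derivative_eq_intros volterra_x_flow[OF H] refl)+)
     (simp add: algebra_simps power2_eq_square)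

lemma volterra_Dy:
  assumes "volterra_hierarchy B"
  shows "Dy (B k) x y t = B k x y t * (V4 B (k+1) x y t - V4 B (k-1) x y t)"
  using assms unfolding volterra_hierarchy_def Dy_def by (blast intro: DERIV_imp_deriv)

lemma volterra_Dt:
  assumes "volterra_hierarchy B"
  shows "Dt (B k) x y t = B k x y t * (V6 B (k+1) x y t - V6 B (k-1) x y t)"
  using assms unfolding volterra_hierarchy_def Dt_def by (blast intro: DERIV_imp_deriv)

lemma volterra_t4_conservation_upper:
  assumes H: "volterra_hierarchy B"
  shows "((\<lambda>s. (B n s y t)^2 + 2 * B n s y t * B (n-1) s y t + Dx (B n) s y t)
           has_real_derivative Dy (B n) x y t) (at x)"
  unfolding volterra_Dx[OF H] volterra_Dy[OF H] V4_def V2_def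
  by (rule DERIV_cong, (rule derivative_eq_intros volterra_x_flow[OF H] refl)+)
     (simp add: algebra_simps power2_eq_square)

lemma volterra_t4_conservation_lower:
  assumes H: "volterra_hierarchy B"
  shows "((\<lambda>s. (B (n-1) s y t)^2 + 2 * B n s y t * B (n-1) s y t - Dx (B (n-1)) s y t)
           has_real_derivative Dy (B (n-1)) x y t) (at x)"
  unfolding volterra_Dx[OF H] volterra_Dy[OF H] V4_def V2_def
  by (rule DERIV_cong, (rule derivative_eq_intros volterra_x_flow[OF H] refl)+)
     (simp add: algebra_simps power2_eq_square)

lemma volterra_t6_conservation_upper:
  assumes H: "volterra_hierarchy B"
  shows "((\<lambda>s. (B n s y t)^3 + 3 * (B (n-1) s y t + 2 * B n s y t) * B n s y t * B (n-1) s y t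
              + 3 * (B n s y t + B (n-1) s y t) * Dx (B n) s y t + Dx (Dx (B n)) s y t)
           has_real_derivative Dt (B n) x y t) (at x)"
  unfolding volterra_Dx_Dx[OF H] volterra_Dx[OF H] volterra_Dt[OF H] V6_def V4_def V2_def
  by (rule DERIV_cong, (rule derivative_eq_intros volterra_x_flow[OF H] refl)+)
     (simp add: algebra_simps power2_eq_square power3_eq_cube)

lemma volterra_t6_conservation_lower:
  assumes H: "volterra_hierarchy B"
  shows "((\<lambda>s. (B (n-1) s y t)^3 + 3 * (B n s y t + 2 * B (n-1) s y t) * B n s y t * B (n-1) s y t
              - 3 * (B n s y t + B (n-1) s y t) * Dx (B (n-1)) s y t + Dx (Dx (B (n-1))) s y t)
           has_real_derivative Dt (B (n-1)) x y t) (at x)"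
  unfolding volterra_Dx_Dx[OF H] volterra_Dx[OF H] volterra_Dt[OF H] V6_def V4_def V2_def
  by (rule DERIV_cong, (rule derivative_eq_intros volterra_x_flow[OF H] refl)+)
     (simp add: algebra_simps power2_eq_square power3_eq_cube)

theorem lemma2p3:
  fixes B :: lattice and n :: int and x y t :: real
  assumes "volterra_hierarchy B"
  shows
   "((\<lambda>s. (B n s y t)^2 + 2 * B n s y t * B (n-1) s y t + Dx (B n) s y t)
       has_real_derivative Dy (B n) x y t) (at x) \<and>
    ((\<lambda>s. (B (n-1) s y t)^2 + 2 * B n s y t * B (n-1) s y t - Dx (B (n-1)) s y t)
       has_real_derivative Dy (B (n-1)) x y t) (at x) \<and>
    ((\<lambda>s. (B n s y t)^3 + 3 * (B (n-1) s y t + 2 * B n s y t) * B n s y t * B (n-1) s y t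
          + 3 * (B n s y t + B (n-1) s y t) * Dx (B n) s y t + Dx (Dx (B n)) s y t)
       has_real_derivative Dt (B n) x y t) (at x) \<and>
    ((\<lambda>s. (B (n-1) s y t)^3 + 3 * (B n s y t + 2 * B (n-1) s y t) * B n s y t * B (n-1) s y t
          - 3 * (B n s y t + B (n-1) s y t) * Dx (B (n-1)) s y t + Dx (Dx (B (n-1))) s y t)
       has_real_derivative Dt (B (n-1)) x y t) (at x)"
proof -
  note volterra_t4_conservation_upper[OF assms] volterra_t4_conservation_lower[OF assms]
    volterra_t6_conservation_upper[OF assms] volterra_t6_conservation_lower[OF assms]
  then show ?thesis by (intro conjI)
qed

end
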